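(* Let $f$ be a piecewise expanding unimodal map. Then there exists $\epsilon>0$ such that $f$ is $\epsilon$-expansive. If furthermore $f$ is good, then there exists $\epsilon>0$ such that $f$ is stably $\epsilon$-expansive.
   Context: Let $I=[-1,1]$ and $c=0$. $\mathcal B^1(I)$ is the Banach space of continuous $f:I\to\mathbb R$ that are $C^1$ on $[-1,0]$ and on $[0,1]$ with $f(1)=f(-1)$, normed by $|f|_1=\max\{|f|_{C^1[-1,0]},|f|_{C^1[0,1]}\}$ where $|f|_{C^1(Q)}=\max(\sup_Q|f|,\sup_Q|Df|)$. A piecewise expanding unimodal map is an $f\in\mathcal B^1(I)$ with $f(-1)=f(1)=-1$, $\inf_{x\in[-1,0]}Df(x)>1$, $\sup_{x\in[0,1]}Df(x)<-1$ and $f(0)\le1$. Such $f$ is good if either $c$ is not periodic, or $c$ has prime period $p\ge2$ and $|Df^{p-1}(f(c))|\min\{|Df^+(c)|,|Df^-(c)|\}>2$ ($Df^\pm(c)$ the one-sided derivatives at $c$). A map $f:I\to I$ is $\epsilon$-expansive if for every interval $L\subset I$ of positive length there is $i\ge1$ with $|f^i(L)|>\epsilon$. A piecewise expanding unimodal map $f_0$ is stably $\epsilon$-expansive if every piecewise expanding unimodal map $f$ sufficiently close to $f_0$ in $|\cdot|_1$ is $\epsilon$-expansive. *)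

theory Defs
  imports "HOL-Analysis.Analysis"
begin

text \<open>The interval I = [-1,1], critical point c = 0. Maps are modelled as
  real functions; only their values on I matter.\<close>

text \<open>Derivative of f at x relative to the (nondegenerate) interval Q
  (one-sided at the endpoints of Q).\<close>
definition dQ :: "real set \<Rightarrow> (real \<Rightarrow> real) \<Rightarrow> real \<Rightarrow> real" where
  "dQ Q f x = (SOME d. (f has_real_derivative d) (at x within Q))"

definition C1_on :: "real set \<Rightarrow> (real \<Rightarrow> real) \<Rightarrow> bool" where
  "C1_on Q f \<longleftrightarrow> (\<exists>g. continuous_on Q g \<and>
      (\<forall>x\<in>Q. (f has_real_derivative g x) (at x within Q)))"

definition B1 :: "(real \<Rightarrow> real) \<Rightarrow> bool" where
  "B1 f \<longleftrightarrow> continuous_on {-1..1} f \<and> C1_on {-1..0} f \<and> C1_on {0..1} f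
      \<and> f 1 = f (-1)"

definition C1norm :: "real set \<Rightarrow> (real \<Rightarrow> real) \<Rightarrow> real" where
  "C1norm Q h = max (SUP x\<in>Q. \<bar>h x\<bar>) (SUP x\<in>Q. \<bar>dQ Q h x\<bar>)"

definition norm1 :: "(real \<Rightarrow> real) \<Rightarrow> real" where
  "norm1 h = max (C1norm {-1..0} h) (C1norm {0..1} h)"

definition pw_exp_unimodal :: "(real \<Rightarrow> real) \<Rightarrow> bool" where
  "pw_exp_unimodal f \<longleftrightarrow> B1 f \<and> f (-1) = -1 \<and> f 1 = -1
     \<and> (INF x\<in>{-1..0}. dQ {-1..0} f x) > 1
     \<and> (SUP x\<in>{0..1}. dQ {0..1} f x) < -1
     \<and> f 0 \<le> 1"

definition prime_period :: "(real \<Rightarrow> real) \<Rightarrow> real \<Rightarrow> nat \<Rightarrow> bool" where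
  "prime_period f x p \<longleftrightarrow> p \<ge> 1 \<and> (f ^^ p) x = x \<and> (\<forall>k. 1 \<le> k \<and> k < p \<longrightarrow> (f ^^ k) x \<noteq> x)"

definition periodic_pt :: "(real \<Rightarrow> real) \<Rightarrow> real \<Rightarrow> bool" where
  "periodic_pt f x \<longleftrightarrow> (\<exists>n\<ge>1. (f ^^ n) x = x)"

definition good :: "(real \<Rightarrow> real) \<Rightarrow> bool" where
  "good f \<longleftrightarrow> \<not> periodic_pt f 0 \<or>
     (\<exists>p. p \<ge> 2 \<and> prime_period f 0 p \<and>
        \<bar>deriv (f ^^ (p - 1)) (f 0)\<bar> * min \<bar>dQ {0..1} f 0\<bar> \<bar>dQ {-1..0} f 0\<bar> > 2)"

definition expansive :: "real \<Rightarrow> (real \<Rightarrow> real) \<Rightarrow> bool" where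
  "expansive \<epsilon> f \<longleftrightarrow> (\<forall>L. is_interval L \<and> L \<subseteq> {-1..1} \<and> diameter L > 0 \<longrightarrow>
      (\<exists>i\<ge>1. diameter ((f ^^ i) ` L) > \<epsilon>))"

definition stably_expansive :: "real \<Rightarrow> (real \<Rightarrow> real) \<Rightarrow> bool" where
  "stably_expansive \<epsilon> f0 \<longleftrightarrow> (\<exists>\<delta>>0. \<forall>f. pw_exp_unimodal f \<and> norm1 (\<lambda>x. f x - f0 x) < \<delta>
      \<longrightarrow> expansive \<epsilon> f)"

end

theory Submission
  imports Defs
begin

text \<open>A piecewise expanding unimodal map stretches every interval inside a lap by some l > 1,
  and an interval around c is still stretched by l/2. So an interval whose images all stay short
  must keep straddling c, and it suffices to see straddling intervals regrow. Pick N with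
  l^N > 2. An interval around c shorter than every nonzero |f^k(c)|, 0 < k < N, spends the next
  N - 1 steps inside laps, because f^k(c) is an endpoint of its k-th image; this gives
  expansivity. Maps g close to f are expanding with a common constant and have critical orbits
  close to that of f. If c is not periodic, the first N points of the critical orbit of g avoid
  a neighbourhood of c and the same argument works. If c has prime period p, short images of an
  interval around c follow the critical orbit for p steps, where g has nearly the slopes of f,
  so they grow by nearly |Df^(p-1)(f c)| min |Df(c\<pm>)| / 2 > 1 when f is good.\<close>

section \<open>Iterates, diameters and limits\<close>

lemma funpow_mem: "h ` S \<subseteq> S \<Longrightarrow> x \<in> S \<Longrightarrow> (h ^^ n) x \<in> S"
  by (induction n) auto

lemma image_funpow_Suc_right: "(f ^^ n) ` f ` S = (f ^^ Suc n) ` S"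
  by (simp only: funpow_Suc_right image_comp)

lemma dist_le_diameter_image:
  fixes g :: "'a::metric_space \<Rightarrow> 'b::metric_space"
  assumes "compact S" "continuous_on S g" "x \<in> S" "y \<in> S"
  shows "dist (g x) (g y) \<le> diameter (g ` S)"
  using assms by (intro diameter_bounded_bound compact_imp_bounded compact_continuous_image) auto

lemma diameter_funpow_image_ge_prod:
  fixes g :: "'a::metric_space \<Rightarrow> 'a"
  assumes "\<And>j. j < n \<Longrightarrow> c j * diameter ((g ^^ j) ` S) \<le> diameter (g ` (g ^^ j) ` S)"
    and "\<And>j. j < n \<Longrightarrow> 0 \<le> c j"
  shows "(\<Prod>j<n. c j) * diameter S \<le> diameter ((g ^^ n) ` S)"
  using assms
proof (induction n)
  case (Suc n)
  have "(\<Prod>j<Suc n. c j) * diameter S = c n * ((\<Prod>j<n. c j) * diameter S)"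
    by (simp add: mult_ac)
  also have "\<dots> \<le> c n * diameter ((g ^^ n) ` S)"
    using Suc by (intro mult_left_mono) auto
  also have "\<dots> \<le> diameter (g ` (g ^^ n) ` S)"
    using Suc.prems(1) by simp
  also have "\<dots> = diameter ((g ^^ Suc n) ` S)"
    by (simp add: image_comp)
  finally show ?case .
qed simp

lemma recurrent_growth_unbounded:
  fixes s :: "nat \<Rightarrow> real"
  assumes "0 < s 0" "1 < \<theta>" "\<And>i. \<exists>j. \<theta> * s i \<le> s j"
  shows "\<exists>n. \<epsilon> < s n"
proof -
  have "\<exists>j. \<theta> ^ m * s 0 \<le> s j" for m
  proof (induction m)
    case (Suc m)
    then obtain j where j: "\<theta> ^ m * s 0 \<le> s j" by blast
    obtain j' where j': "\<theta> * s j \<le> s j'" using assms(3) by blast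
    have "\<theta> ^ Suc m * s 0 = \<theta> * (\<theta> ^ m * s 0)" by simp
    also have "\<dots> \<le> \<theta> * s j" using j assms(2) by (intro mult_left_mono) auto
    finally show ?case using j' by (meson order_trans)
  qed auto
  moreover obtain m where "\<epsilon> / s 0 < \<theta> ^ m" using real_arch_pow assms(2) by blast
  then have "\<epsilon> < \<theta> ^ m * s 0" using assms(1) by (simp add: pos_divide_less_eq)
  ultimately show ?thesis by (meson less_le_trans)
qed

lemma diameter_pos_imp_less:
  fixes L :: "real set"
  assumes "0 < diameter L"
  shows "\<exists>x\<in>L. \<exists>y\<in>L. x < y"
proof -
  obtain c where c: "c \<in> L" using assms by fastforce
  moreover have "L \<noteq> {c}" using assms by auto
  ultimately obtain y where y: "y \<in> L" "y \<noteq> c" by blast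
  show ?thesis
  proof (cases "c < y")
    case True
    with c y show ?thesis by blast
  next
    case False
    with y have "y < c" by simp
    with c y show ?thesis by blast
  qed
qed

lemma funpow_uniformly_close:
  fixes f :: "'a::metric_space \<Rightarrow> 'a"
  assumes S: "compact S" "continuous_on S f" "f ` S \<subseteq> S" and "x \<in> S" "0 < \<eta>"
  shows "\<exists>\<delta>>0. \<forall>g. g ` S \<subseteq> S \<longrightarrow> (\<forall>y\<in>S. dist (g y) (f y) < \<delta>) \<longrightarrow>
    (\<forall>k\<le>n. dist ((g ^^ k) x) ((f ^^ k) x) < \<eta>)"
  using \<open>0 < \<eta>\<close>
proof (induction n arbitrary: \<eta>)
  case 0
  then show ?case by (intro exI[of _ 1]) auto
next
  case (Suc n)
  have "0 < \<eta> / 2" using Suc.prems by simp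
  then have "\<exists>\<rho>>0. \<forall>y\<in>S. \<forall>y'\<in>S. dist y' y < \<rho> \<longrightarrow> dist (f y') (f y) < \<eta> / 2"
    using compact_uniformly_continuous[OF S(2,1)] unfolding uniformly_continuous_on_def by blast
  then obtain \<rho> where \<rho>: "0 < \<rho>" "\<forall>y\<in>S. \<forall>y'\<in>S. dist y' y < \<rho> \<longrightarrow> dist (f y') (f y) < \<eta> / 2"
    by blast
  have "0 < min \<eta> \<rho>" using Suc.prems \<rho>(1) by simp
  from Suc.IH[OF this] obtain \<delta> where \<delta>: "0 < \<delta>" "\<forall>g. g ` S \<subseteq> S \<longrightarrow> (\<forall>y\<in>S. dist (g y) (f y) < \<delta>) \<longrightarrow>
      (\<forall>k\<le>n. dist ((g ^^ k) x) ((f ^^ k) x) < min \<eta> \<rho>)"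
    by blast
  show ?case
  proof (intro exI[of _ "min \<delta> (\<eta> / 2)"] conjI allI impI)
    show "0 < min \<delta> (\<eta> / 2)" using \<delta>(1) Suc.prems by simp
    fix g k assume g: "g ` S \<subseteq> S" "\<forall>y\<in>S. dist (g y) (f y) < min \<delta> (\<eta> / 2)" and "k \<le> Suc n"
    have "\<forall>y\<in>S. dist (g y) (f y) < \<delta>" using g(2) by simp
    then have close: "dist ((g ^^ k) x) ((f ^^ k) x) < min \<eta> \<rho>" if "k \<le> n" for k
      using \<delta>(2) g(1) that by blast
    show "dist ((g ^^ k) x) ((f ^^ k) x) < \<eta>"
    proof (cases "k \<le> n")
      case True
      then show ?thesis using close[OF True] by simp
    next
      case False
      then have k: "k = Suc n" using \<open>k \<le> Suc n\<close> by simp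
      have mem: "(g ^^ n) x \<in> S" "(f ^^ n) x \<in> S"
        by (rule funpow_mem[OF g(1) \<open>x \<in> S\<close>], rule funpow_mem[OF S(3) \<open>x \<in> S\<close>])
      have "dist (f ((g ^^ n) x)) (f ((f ^^ n) x)) < \<eta> / 2"
        using \<rho>(2) mem close[of n] by simp
      moreover have "dist (g ((g ^^ n) x)) (f ((g ^^ n) x)) < \<eta> / 2" using g(2) mem(1) by simp
      moreover have "dist ((g ^^ k) x) ((f ^^ k) x)
          \<le> dist (g ((g ^^ n) x)) (f ((g ^^ n) x)) + dist (f ((g ^^ n) x)) (f ((f ^^ n) x))"
        unfolding k funpow.simps o_apply by (rule dist_triangle)
      ultimately show ?thesis by linarith
    qed
  qed
qed

lemma DERIV_funpow:
  assumes "\<And>k. k < n \<Longrightarrow> (f has_real_derivative D k) (at ((f ^^ k) x))"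
  shows "((f ^^ n) has_real_derivative (\<Prod>k<n. D k)) (at x)"
  using assms
proof (induction n)
  case (Suc n)
  have "(f has_real_derivative D n) (at ((f ^^ n) x))" using Suc.prems by simp
  moreover have "((f ^^ n) has_real_derivative (\<Prod>k<n. D k)) (at x)" using Suc by simp
  ultimately have "(f \<circ> (f ^^ n) has_real_derivative D n * (\<Prod>k<n. D k)) (at x)"
    by (rule DERIV_chain)
  then show ?case by (simp add: comp_def mult.commute)
qed (simp add: id_def DERIV_ident)

lemma eventually_perturbed_prod_gt_1:
  fixes a :: "nat \<Rightarrow> real"
  assumes "1 < m / 2 * (\<Prod>j<n. a j)"
  shows "\<forall>\<^sub>F \<tau> in at_right 0. 1 < (m - \<tau>) / 2 * (\<Prod>j<n. a j - \<tau>)"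
proof -
  have "((\<lambda>\<tau>. (m - \<tau>) / 2 * (\<Prod>j<n. a j - \<tau>)) \<longlongrightarrow> (m - 0) / 2 * (\<Prod>j<n. a j - 0)) (at_right 0)"
    by (intro tendsto_intros) simp
  then have "((\<lambda>\<tau>. (m - \<tau>) / 2 * (\<Prod>j<n. a j - \<tau>)) \<longlongrightarrow> m / 2 * (\<Prod>j<n. a j)) (at_right 0)"
    by simp
  then show ?thesis using assms by (rule order_tendstoD(1))
qed

section \<open>Derivatives of maps in B^1(I)\<close>

lemma dQ_eq:
  assumes "a < b" "x \<in> {a..b}" "(f has_real_derivative D) (at x within {a..b})"
  shows "dQ {a..b} f x = D"
proof -
  have "(f has_real_derivative dQ {a..b} f x) (at x within {a..b})"
    unfolding dQ_def using assms(3) by (rule someI)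
  then have "(\<lambda>h. dQ {a..b} f x * h) = (\<lambda>h. D * h)"
    using assms by (intro frechet_derivative_unique_within_closed_interval[of a b x f])
      (auto simp: has_field_derivative_def)
  then show ?thesis by (metis mult_1_right)
qed

lemma C1_onD:
  assumes "C1_on {a..b} f" "a < b"
  shows "continuous_on {a..b} (dQ {a..b} f)"
    and "x \<in> {a..b} \<Longrightarrow> (f has_real_derivative dQ {a..b} f x) (at x within {a..b})"
proof -
  obtain g where g: "continuous_on {a..b} g"
    "\<And>x. x \<in> {a..b} \<Longrightarrow> (f has_real_derivative g x) (at x within {a..b})"
    using assms(1) unfolding C1_on_def by blast
  have eq: "\<And>x. x \<in> {a..b} \<Longrightarrow> dQ {a..b} f x = g x"
    using dQ_eq g(2) assms(2) by blast
  show "continuous_on {a..b} (dQ {a..b} f)"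
    using continuous_on_eq[OF g(1)] eq by metis
  show "x \<in> {a..b} \<Longrightarrow> (f has_real_derivative dQ {a..b} f x) (at x within {a..b})"
    using g(2) eq by simp
qed

lemma B1D:
  assumes "B1 f"
  shows "continuous_on {-1..1} f"
    and "continuous_on {-1..0} (dQ {-1..0} f)" "continuous_on {0..1} (dQ {0..1} f)"
    and "x \<in> {-1..0} \<Longrightarrow> (f has_real_derivative dQ {-1..0} f x) (at x within {-1..0})"
    and "x \<in> {0..1} \<Longrightarrow> (f has_real_derivative dQ {0..1} f x) (at x within {0..1})"
  using assms C1_onD[of "-1" 0 f] C1_onD[of 0 1 f] unfolding B1_def by auto

text \<open>At the turning point c = 0 this is the right derivative.\<close>

definition pw_deriv :: "(real \<Rightarrow> real) \<Rightarrow> real \<Rightarrow> real" where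
  "pw_deriv f x = (if x < 0 then dQ {-1..0} f x else dQ {0..1} f x)"

lemma B1_has_real_derivative_pw_deriv:
  assumes "B1 f" "-1 < x" "x < 1" "x \<noteq> 0"
  shows "(f has_real_derivative pw_deriv f x) (at x)"
proof (cases "x < 0")
  case True
  then show ?thesis
    using B1D(4)[OF assms(1), of x] assms at_within_Icc_at[of "-1" x 0] by (simp add: pw_deriv_def)
next
  case False
  then show ?thesis
    using B1D(5)[OF assms(1), of x] assms at_within_Icc_at[of 0 x 1] by (simp add: pw_deriv_def)
qed

lemma B1_isCont_pw_deriv:
  assumes "B1 f" "-1 < x" "x < 1" "x \<noteq> 0"
  shows "isCont (pw_deriv f) x"
proof (cases "x < 0")
  case True
  have "continuous_on {-1<..<0} (dQ {-1..0} f)"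
    using B1D(2)[OF assms(1)] by (rule continuous_on_subset) auto
  then have "continuous_on {-1<..<0} (pw_deriv f)"
    by (rule continuous_on_eq) (auto simp: pw_deriv_def)
  then show ?thesis
    using True assms by (simp add: continuous_on_eq_continuous_at)
next
  case False
  have "continuous_on {0<..<1} (dQ {0..1} f)"
    using B1D(3)[OF assms(1)] by (rule continuous_on_subset) auto
  then have "continuous_on {0<..<1} (pw_deriv f)"
    by (rule continuous_on_eq) (auto simp: pw_deriv_def)
  then show ?thesis
    using False assms by (simp add: continuous_on_eq_continuous_at)
qed

definition in_lap :: "real set \<Rightarrow> bool" where
  "in_lap J \<longleftrightarrow> J \<subseteq> {-1..0} \<or> J \<subseteq> {0..1}"

lemma in_lap_subset: "in_lap J \<Longrightarrow> K \<subseteq> J \<Longrightarrow> in_lap K"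
  unfolding in_lap_def by blast

lemma in_lap_if_far_point:
  assumes "is_interval J" "J \<subseteq> {-1..1}" "z \<in> J" "diameter J < \<bar>z\<bar>"
  shows "in_lap J"
proof (rule ccontr)
  assume "\<not> in_lap J"
  then obtain s t where st: "s \<in> J" "t \<in> J" "s < 0" "0 < t"
    using assms(2) unfolding in_lap_def subset_iff by (meson atLeastAtMost_iff not_le)
  then have "0 \<in> J" using assms(1) unfolding is_interval_1 by (meson less_imp_le)
  have "bounded J" using assms(2) by (rule bounded_subset[OF bounded_closed_interval])
  then have "dist z 0 \<le> diameter J" using assms(3) \<open>0 \<in> J\<close> by (rule diameter_bounded_bound)
  then show False using assms(4) by simp
qed

lemma in_lap_closed_segment_0:
  assumes "closed_segment a 0 \<subseteq> {-1..1}"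
  shows "in_lap (closed_segment a (0::real))"
  using assms ends_in_segment(1)[of a 0] by (auto simp: in_lap_def closed_segment_eq_real_ivl)

lemma B1_mean_value_on_lap:
  assumes "B1 f" "x < y" "in_lap {x..y}"
  obtains \<xi> where "x < \<xi>" "\<xi> < y" "f y - f x = (y - x) * pw_deriv f \<xi>"
proof -
  have inner: "-1 < \<xi> \<and> \<xi> < 1 \<and> \<xi> \<noteq> 0" if "x < \<xi>" "\<xi> < y" for \<xi>
    using assms(2,3) that by (auto simp: in_lap_def)
  have "continuous_on {x..y} f"
    using assms(3) by (intro continuous_on_subset[OF B1D(1)[OF assms(1)]]) (auto simp: in_lap_def)
  moreover have "f differentiable (at \<xi>)" if "x < \<xi>" "\<xi> < y" for \<xi>
    using B1_has_real_derivative_pw_deriv[OF assms(1)] inner[OF that] real_differentiable_def by blast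
  ultimately obtain d \<xi> where \<xi>: "x < \<xi>" "\<xi> < y" "DERIV f \<xi> :> d" "f y - f x = (y - x) * d"
    using MVT[OF assms(2)] by blast
  have "d = pw_deriv f \<xi>"
    using DERIV_unique[OF \<xi>(3) B1_has_real_derivative_pw_deriv[OF assms(1)]] inner[OF \<xi>(1,2)] by blast
  then show ?thesis using that \<xi> by blast
qed

lemma B1_increment_ge:
  assumes "B1 g" "x \<le> y" "in_lap {x..y}" "\<And>\<xi>. x < \<xi> \<Longrightarrow> \<xi> < y \<Longrightarrow> c \<le> pw_deriv g \<xi>"
  shows "c * (y - x) \<le> g y - g x"
proof (cases "x = y")
  case False
  then obtain \<xi> where \<xi>: "x < \<xi>" "\<xi> < y" "g y - g x = (y - x) * pw_deriv g \<xi>"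
    using B1_mean_value_on_lap[OF assms(1) _ assms(3)] assms(2) by (metis order_le_less)
  have "c * (y - x) \<le> pw_deriv g \<xi> * (y - x)"
    using assms(4)[OF \<xi>(1,2)] \<xi>(1,2) by (intro mult_right_mono) auto
  then show ?thesis using \<xi>(3) by (simp add: mult.commute)
qed simp

lemma B1_decrement_ge:
  assumes "B1 g" "x \<le> y" "in_lap {x..y}" "\<And>\<xi>. x < \<xi> \<Longrightarrow> \<xi> < y \<Longrightarrow> pw_deriv g \<xi> \<le> -c"
  shows "c * (y - x) \<le> g x - g y"
proof (cases "x = y")
  case False
  then obtain \<xi> where \<xi>: "x < \<xi>" "\<xi> < y" "g y - g x = (y - x) * pw_deriv g \<xi>"
    using B1_mean_value_on_lap[OF assms(1) _ assms(3)] assms(2) by (metis order_le_less)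
  have "c * (y - x) \<le> - pw_deriv g \<xi> * (y - x)"
    using assms(4)[OF \<xi>(1,2)] \<xi>(1,2) by (intro mult_right_mono) auto
  then show ?thesis using \<xi>(3) by (simp add: algebra_simps)
qed simp

lemma B1_abs_increment_ge:
  assumes "B1 g" "x \<le> y" "in_lap {x..y}" "\<And>\<xi>. x < \<xi> \<Longrightarrow> \<xi> < y \<Longrightarrow> c \<le> \<bar>pw_deriv g \<xi>\<bar>"
  shows "c * (y - x) \<le> \<bar>g y - g x\<bar>"
proof (cases "x = y")
  case False
  then obtain \<xi> where \<xi>: "x < \<xi>" "\<xi> < y" "g y - g x = (y - x) * pw_deriv g \<xi>"
    using B1_mean_value_on_lap[OF assms(1) _ assms(3)] assms(2) by (metis order_le_less)
  have "c * (y - x) \<le> \<bar>pw_deriv g \<xi>\<bar> * (y - x)"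
    using assms(4)[OF \<xi>(1,2)] \<xi>(1,2) by (intro mult_right_mono) auto
  then show ?thesis using \<xi> by (simp add: abs_mult mult.commute)
qed simp

lemma C1norm_ge:
  assumes "continuous_on {a..b} h" "continuous_on {a..b} (dQ {a..b} h)" "x \<in> {a..b}"
  shows "\<bar>h x\<bar> \<le> C1norm {a..b} h" "\<bar>dQ {a..b} h x\<bar> \<le> C1norm {a..b} h"
proof -
  have "bounded ((\<lambda>x. \<bar>h x\<bar>) ` {a..b})" "bounded ((\<lambda>x. \<bar>dQ {a..b} h x\<bar>) ` {a..b})"
    using assms(1,2)
    by (auto intro!: compact_imp_bounded compact_continuous_image continuous_intros)
  then have "\<bar>h x\<bar> \<le> (SUP x\<in>{a..b}. \<bar>h x\<bar>)" "\<bar>dQ {a..b} h x\<bar> \<le> (SUP x\<in>{a..b}. \<bar>dQ {a..b} h x\<bar>)"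
    using assms(3) by (auto intro!: cSUP_upper bounded_imp_bdd_above)
  then show "\<bar>h x\<bar> \<le> C1norm {a..b} h" "\<bar>dQ {a..b} h x\<bar> \<le> C1norm {a..b} h"
    unfolding C1norm_def by linarith+
qed

lemma C1norm_diff_ge:
  assumes "a < b" "C1_on {a..b} f" "C1_on {a..b} g" "x \<in> {a..b}"
  shows "\<bar>g x - f x\<bar> \<le> C1norm {a..b} (\<lambda>x. g x - f x)"
    and "\<bar>dQ {a..b} g x - dQ {a..b} f x\<bar> \<le> C1norm {a..b} (\<lambda>x. g x - f x)"
proof -
  note F = C1_onD[OF assms(2,1)] and G = C1_onD[OF assms(3,1)]
  have eq: "dQ {a..b} (\<lambda>x. g x - f x) z = dQ {a..b} g z - dQ {a..b} f z" if "z \<in> {a..b}" for z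
    using dQ_eq[OF assms(1) that DERIV_diff[OF G(2)[OF that] F(2)[OF that]]] .
  have "continuous_on {a..b} (\<lambda>x. g x - f x)"
    using F(2) G(2) by (intro continuous_on_diff DERIV_continuous_on) auto
  moreover have "continuous_on {a..b} (dQ {a..b} (\<lambda>x. g x - f x))"
    by (rule continuous_on_eq[OF continuous_on_diff[OF G(1) F(1)]]) (simp add: eq)
  ultimately show "\<bar>g x - f x\<bar> \<le> C1norm {a..b} (\<lambda>x. g x - f x)"
    and "\<bar>dQ {a..b} g x - dQ {a..b} f x\<bar> \<le> C1norm {a..b} (\<lambda>x. g x - f x)"
    using C1norm_ge[OF _ _ assms(4)] unfolding eq[OF assms(4), symmetric] by blast+
qed

lemma norm1_diff_ge:
  assumes "B1 f" "B1 g" "x \<in> {-1..1}"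
  shows "\<bar>g x - f x\<bar> \<le> norm1 (\<lambda>x. g x - f x)"
    and "\<bar>pw_deriv g x - pw_deriv f x\<bar> \<le> norm1 (\<lambda>x. g x - f x)"
proof -
  have C1: "C1_on {-1..0} f" "C1_on {0..1} f" "C1_on {-1..0} g" "C1_on {0..1} g"
    using assms(1,2) by (auto simp: B1_def)
  have "C1norm {-1..0} (\<lambda>x. g x - f x) \<le> norm1 (\<lambda>x. g x - f x)"
    "C1norm {0..1} (\<lambda>x. g x - f x) \<le> norm1 (\<lambda>x. g x - f x)"
    by (auto simp: norm1_def)
  moreover have "\<bar>g x - f x\<bar> \<le> C1norm {-1..0} (\<lambda>x. g x - f x)"
    "\<bar>pw_deriv g x - pw_deriv f x\<bar> \<le> C1norm {-1..0} (\<lambda>x. g x - f x)" if "x < 0"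
    using C1norm_diff_ge[of "-1" 0 f g x] C1 assms(3) that by (auto simp: pw_deriv_def)
  moreover have "\<bar>g x - f x\<bar> \<le> C1norm {0..1} (\<lambda>x. g x - f x)"
    "\<bar>pw_deriv g x - pw_deriv f x\<bar> \<le> C1norm {0..1} (\<lambda>x. g x - f x)" if "\<not> x < 0"
    using C1norm_diff_ge[of 0 1 f g x] C1 assms(3) that by (auto simp: pw_deriv_def)
  ultimately show "\<bar>g x - f x\<bar> \<le> norm1 (\<lambda>x. g x - f x)"
    and "\<bar>pw_deriv g x - pw_deriv f x\<bar> \<le> norm1 (\<lambda>x. g x - f x)"
    by (cases "x < 0"; linarith)+
qed

lemma pw_exp_unimodal_expansion:
  assumes "pw_exp_unimodal f"
  obtains \<Lambda> where "1 < \<Lambda>" "\<Lambda> \<le> dQ {-1..0} f 0"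
    "\<And>x. -1 \<le> x \<Longrightarrow> x < 0 \<Longrightarrow> \<Lambda> \<le> pw_deriv f x"
    "\<And>x. 0 \<le> x \<Longrightarrow> x \<le> 1 \<Longrightarrow> pw_deriv f x \<le> -\<Lambda>"
proof -
  define A where "A = (INF x\<in>{-1..0}. dQ {-1..0} f x)"
  define B where "B = (SUP x\<in>{0..1}. dQ {0..1} f x)"
  have f: "B1 f" and AB: "1 < A" "B < -1"
    using assms unfolding pw_exp_unimodal_def A_def B_def by auto
  have "bounded (dQ {-1..0} f ` {-1..0})" "bounded (dQ {0..1} f ` {0..1})"
    using B1D(2,3)[OF f] by (auto intro: compact_imp_bounded compact_continuous_image)
  then have A_le: "A \<le> dQ {-1..0} f x" if "x \<in> {-1..0}" for x
    unfolding A_def using that by (intro cINF_lower bounded_imp_bdd_below) auto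
  have le_B: "dQ {0..1} f x \<le> B" if "x \<in> {0..1}" for x
    unfolding B_def using that \<open>bounded (dQ {0..1} f ` {0..1})\<close>
    by (intro cSUP_upper bounded_imp_bdd_above) auto
  show ?thesis
  proof (rule that[of "min A (-B)"])
    show "1 < min A (-B)" using AB by simp
    show "min A (-B) \<le> dQ {-1..0} f 0" using A_le[of 0] by simp
    show "min A (-B) \<le> pw_deriv f x" if "-1 \<le> x" "x < 0" for x
      using A_le[of x] that by (simp add: pw_deriv_def)
    show "pw_deriv f x \<le> - min A (-B)" if "0 \<le> x" "x \<le> 1" for x
      using le_B[of x] that by (simp add: pw_deriv_def)
  qed
qed

section \<open>Expanding unimodal maps\<close>

definition expanding_unimodal :: "real \<Rightarrow> (real \<Rightarrow> real) \<Rightarrow> bool" where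
  "expanding_unimodal l g \<longleftrightarrow> 1 < l \<and> continuous_on {-1..1} g \<and> g (-1) = -1 \<and> g 1 = -1 \<and> g 0 \<le> 1
     \<and> (\<forall>x y. -1 \<le> x \<longrightarrow> x \<le> y \<longrightarrow> y \<le> 0 \<longrightarrow> l * (y - x) \<le> g y - g x)
     \<and> (\<forall>x y. 0 \<le> x \<longrightarrow> x \<le> y \<longrightarrow> y \<le> 1 \<longrightarrow> l * (y - x) \<le> g x - g y)"

lemma expanding_unimodal_if_pw_deriv_bounds:
  assumes g: "pw_exp_unimodal g" and "1 < l"
    and left: "\<And>x. -1 < x \<Longrightarrow> x < 0 \<Longrightarrow> l \<le> pw_deriv g x"
    and right: "\<And>x. 0 < x \<Longrightarrow> x < 1 \<Longrightarrow> pw_deriv g x \<le> -l"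
  shows "expanding_unimodal l g"
proof -
  have B: "B1 g" using g by (simp add: pw_exp_unimodal_def)
  have "l * (y - x) \<le> g y - g x" if xy: "-1 \<le> x" "x \<le> y" "y \<le> 0" for x y
  proof (rule B1_increment_ge[OF B xy(2)])
    show "in_lap {x..y}" using xy by (simp add: in_lap_def)
    fix \<xi> assume "x < \<xi>" "\<xi> < y"
    with xy show "l \<le> pw_deriv g \<xi>" by (intro left) auto
  qed
  moreover have "l * (y - x) \<le> g x - g y" if xy: "0 \<le> x" "x \<le> y" "y \<le> 1" for x y
  proof (rule B1_decrement_ge[OF B xy(2)])
    show "in_lap {x..y}" using xy by (simp add: in_lap_def)
    fix \<xi> assume "x < \<xi>" "\<xi> < y"
    with xy show "pw_deriv g \<xi> \<le> -l" by (intro right) auto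
  qed
  moreover have "continuous_on {-1..1} g" "g (-1) = -1" "g 1 = -1" "g 0 \<le> 1"
    using g B1D(1)[OF B] by (auto simp: pw_exp_unimodal_def)
  ultimately show ?thesis using \<open>1 < l\<close> unfolding expanding_unimodal_def by blast
qed

lemma pw_exp_unimodal_expanding_nearby:
  assumes f: "pw_exp_unimodal f"
  obtains l \<delta> where "0 < \<delta>" "expanding_unimodal l f"
    "\<And>g. pw_exp_unimodal g \<Longrightarrow> norm1 (\<lambda>x. g x - f x) < \<delta> \<Longrightarrow> expanding_unimodal l g"
proof -
  obtain \<Lambda> where \<Lambda>: "1 < \<Lambda>" "\<Lambda> \<le> dQ {-1..0} f 0"
    "\<And>x. -1 \<le> x \<Longrightarrow> x < 0 \<Longrightarrow> \<Lambda> \<le> pw_deriv f x"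
    "\<And>x. 0 \<le> x \<Longrightarrow> x \<le> 1 \<Longrightarrow> pw_deriv f x \<le> -\<Lambda>"
    using pw_exp_unimodal_expansion[OF f] by metis
  define l where "l = (\<Lambda> + 1) / 2"
  have l: "1 < l" "l \<le> \<Lambda>" using \<Lambda>(1) by (auto simp: l_def)
  have "expanding_unimodal l g" if g: "pw_exp_unimodal g" "norm1 (\<lambda>x. g x - f x) < \<Lambda> - l" for g
  proof (rule expanding_unimodal_if_pw_deriv_bounds[OF g(1) l(1)])
    have B: "B1 f" "B1 g" using f g(1) by (simp_all add: pw_exp_unimodal_def)
    have close: "\<bar>pw_deriv g x - pw_deriv f x\<bar> < \<Lambda> - l" if "x \<in> {-1..1}" for x
      using norm1_diff_ge(2)[OF B that] g(2) by linarith
    show "l \<le> pw_deriv g x" if "-1 < x" "x < 0" for x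
      using close[of x] \<Lambda>(3)[of x] that by simp
    show "pw_deriv g x \<le> -l" if "0 < x" "x < 1" for x
      using close[of x] \<Lambda>(4)[of x] that by simp
  qed
  moreover have "expanding_unimodal l f"
  proof (rule expanding_unimodal_if_pw_deriv_bounds[OF f l(1)])
    show "l \<le> pw_deriv f x" if "-1 < x" "x < 0" for x
      using \<Lambda>(3)[of x] l that by simp
    show "pw_deriv f x \<le> -l" if "0 < x" "x < 1" for x
      using \<Lambda>(4)[of x] l that by simp
  qed
  moreover have "0 < \<Lambda> - l" using \<Lambda>(1) by (simp add: l_def)
  ultimately show ?thesis using that by blast
qed

lemma expanding_unimodalD:
  assumes "expanding_unimodal l g"
  shows "1 < l" "continuous_on {-1..1} g" "g (-1) = -1" "g 1 = -1" "g 0 \<le> 1"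
    and "-1 \<le> x \<Longrightarrow> x \<le> y \<Longrightarrow> y \<le> 0 \<Longrightarrow> l * (y - x) \<le> g y - g x"
    and "0 \<le> x \<Longrightarrow> x \<le> y \<Longrightarrow> y \<le> 1 \<Longrightarrow> l * (y - x) \<le> g x - g y"
  using assms unfolding expanding_unimodal_def by blast+

lemma expanding_unimodal_le_critical_value:
  assumes g: "expanding_unimodal l g" and x: "x \<in> {-1..1}"
  shows "-1 \<le> g x \<and> g x \<le> g 0"
proof -
  have l: "0 \<le> l" using expanding_unimodalD(1)[OF g] by simp
  show ?thesis
  proof (cases "x \<le> 0")
    case True
    then have "0 \<le> l * (x + 1)" "0 \<le> l * (0 - x)" using l x by (intro mult_nonneg_nonneg; simp)+
    then show ?thesis
      using expanding_unimodalD(3)[OF g] expanding_unimodalD(6)[OF g, of "-1" x]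
        expanding_unimodalD(6)[OF g, of x 0] True x
      by auto
  next
    case False
    then have "0 \<le> l * (1 - x)" "0 \<le> l * (x - 0)" using l x by (intro mult_nonneg_nonneg; simp)+
    then show ?thesis
      using expanding_unimodalD(4)[OF g] expanding_unimodalD(7)[OF g, of x 1]
        expanding_unimodalD(7)[OF g, of 0 x] False x
      by auto
  qed
qed

lemma expanding_unimodal_maps_into:
  assumes g: "expanding_unimodal l g"
  shows "g ` {-1..1} \<subseteq> {-1..1}"
  using expanding_unimodal_le_critical_value[OF g] expanding_unimodalD(5)[OF g] by force

lemma expanding_unimodal_funpow:
  assumes g: "expanding_unimodal l g"
  shows "(g ^^ n) ` {-1..1} \<subseteq> {-1..1}" "continuous_on {-1..1} (g ^^ n)"
proof -
  have maps: "(g ^^ k) x \<in> {-1..1}" if "x \<in> {-1..1}" for x k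
    using funpow_mem[OF expanding_unimodal_maps_into[OF g] that] .
  then show "(g ^^ n) ` {-1..1} \<subseteq> {-1..1}" by blast
  show "continuous_on {-1..1} (g ^^ n)"
  proof (induction n)
    case (Suc n)
    have "continuous_on ((g ^^ n) ` {-1..1}) g"
      by (rule continuous_on_subset[OF expanding_unimodalD(2)[OF g]]) (use maps in blast)
    with Suc have "continuous_on {-1..1} (g \<circ> (g ^^ n))" by (rule continuous_on_compose)
    then show ?case by simp
  qed simp
qed

lemma expanding_unimodal_funpow_image_Icc:
  assumes g: "expanding_unimodal l g" and "a \<le> b" "{a..b} \<subseteq> {-1..1}"
  obtains P Q where "(g ^^ n) ` {a..b} = {P..Q}" "P \<le> Q" "{P..Q} \<subseteq> {-1..1}"
proof -
  have "continuous_on {a..b} (g ^^ n)"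
    using expanding_unimodal_funpow(2)[OF g] assms(3) by (rule continuous_on_subset)
  then obtain P Q where "(g ^^ n) ` {a..b} = {P..Q}" "P \<le> Q"
    using continuous_image_closed_interval[OF assms(2)] by blast
  moreover have "(g ^^ n) ` {a..b} \<subseteq> {-1..1}"
    using expanding_unimodal_funpow(1)[OF g] assms(3) by blast
  ultimately show ?thesis using that by simp
qed

lemma expanding_unimodal_abs_diff_ge_on_lap:
  assumes g: "expanding_unimodal l g" and "x \<le> y" "in_lap {x..y}"
  shows "l * (y - x) \<le> \<bar>g y - g x\<bar>"
  using assms(3) expanding_unimodalD(6,7)[OF g, of x y] \<open>x \<le> y\<close>
  unfolding in_lap_def by (cases "x = y") auto

lemma expanding_unimodal_diameter_image_lap:
  assumes g: "expanding_unimodal l g" and "P \<le> Q" "in_lap {P..Q}"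
  shows "l * (Q - P) \<le> diameter (g ` {P..Q})"
proof -
  have "continuous_on {P..Q} g"
    using assms(3)
    by (intro continuous_on_subset[OF expanding_unimodalD(2)[OF g]]) (auto simp: in_lap_def)
  then have "\<bar>g Q - g P\<bar> \<le> diameter (g ` {P..Q})"
    using dist_le_diameter_image[of "{P..Q}" g Q P] \<open>P \<le> Q\<close> by (simp add: dist_real_def)
  then show ?thesis using expanding_unimodal_abs_diff_ge_on_lap[OF assms] by linarith
qed

text \<open>One of the halves [u, c] and [c, v] carries at least half of the length.\<close>

lemma expanding_unimodal_diameter_image_fold:
  assumes g: "expanding_unimodal l g" and "u \<le> 0" "0 \<le> v" "{u..v} \<subseteq> {-1..1}"
  shows "l / 2 * (v - u) \<le> diameter (g ` {u..v})"
proof -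
  have "continuous_on {u..v} g"
    using assms(4) by (rule continuous_on_subset[OF expanding_unimodalD(2)[OF g]])
  then have "\<bar>g 0 - g u\<bar> \<le> diameter (g ` {u..v})" "\<bar>g 0 - g v\<bar> \<le> diameter (g ` {u..v})"
    using dist_le_diameter_image[of "{u..v}" g] assms(2-4) by (auto simp: dist_real_def)
  moreover have "l * (0 - u) \<le> g 0 - g u" "l * (v - 0) \<le> g 0 - g v"
    using expanding_unimodalD(6)[OF g, of u 0] expanding_unimodalD(7)[OF g, of 0 v] assms by auto
  ultimately show ?thesis by (simp add: algebra_simps)
qed

lemma expanding_unimodal_image_lap:
  assumes g: "expanding_unimodal l g" and lap: "in_lap (closed_segment x y)"
  shows "g ` closed_segment x y = closed_segment (g x) (g y)"
proof (rule continuous_injective_image_segment_1)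
  show "continuous_on (closed_segment x y) g"
    using lap by (intro continuous_on_subset[OF expanding_unimodalD(2)[OF g]]) (auto simp: in_lap_def)
  have ne: "g a \<noteq> g b" if "a \<in> closed_segment x y" "b \<in> closed_segment x y" "a < b" for a b
  proof -
    have "{a..b} \<subseteq> closed_segment x y"
      using closed_segment_subset[OF that(1,2) convex_closed_segment] closed_segment_eq_real_ivl1[of a b]
        \<open>a < b\<close> by simp
    then have "l * (b - a) \<le> \<bar>g b - g a\<bar>"
      using expanding_unimodal_abs_diff_ge_on_lap[OF g] in_lap_subset[OF lap] \<open>a < b\<close> by simp
    moreover have "0 < l * (b - a)" using expanding_unimodalD(1)[OF g] \<open>a < b\<close> by simp
    ultimately show ?thesis by linarith
  qed
  show "inj_on g (closed_segment x y)"
  proof (rule inj_onI)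
    fix a b assume "a \<in> closed_segment x y" "b \<in> closed_segment x y" "g a = g b"
    then show "a = b" using ne[of a b] ne[of b a] by (cases a b rule: linorder_cases) auto
  qed
qed

section \<open>Expansivity\<close>

text \<open>A short interval that never becomes long either lies in a lap, where it is stretched by l,
  or straddles c; so it suffices that straddling intervals which stay short grow by \<theta>.\<close>

lemma expanding_unimodal_short_interval_regrows:
  assumes g: "expanding_unimodal l g" and "\<theta> \<le> l"
    and grow: "\<And>u v. u < 0 \<Longrightarrow> 0 < v \<Longrightarrow> {u..v} \<subseteq> {-1..1} \<Longrightarrow>
      (\<And>n. diameter ((g ^^ n) ` {u..v}) \<le> \<epsilon>) \<Longrightarrow> \<exists>n. \<theta> * (v - u) \<le> diameter ((g ^^ n) ` {u..v})"
    and J: "x \<le> b" "{x..b} \<subseteq> {-1..1}" and short: "\<And>n. diameter ((g ^^ n) ` {x..b}) \<le> \<epsilon>"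
  shows "\<exists>j. \<theta> * diameter ((g ^^ i) ` {x..b}) \<le> diameter ((g ^^ j) ` {x..b})"
proof -
  obtain u v where uv: "(g ^^ i) ` {x..b} = {u..v}" "u \<le> v" "{u..v} \<subseteq> {-1..1}"
    using expanding_unimodal_funpow_image_Icc[OF g J] by blast
  have shift: "(g ^^ n) ` {u..v} = (g ^^ (n + i)) ` {x..b}" for n
    by (simp add: uv(1)[symmetric] image_comp funpow_add)
  show ?thesis
  proof (cases "in_lap {u..v}")
    case True
    have "\<theta> * (v - u) \<le> l * (v - u)" using \<open>\<theta> \<le> l\<close> uv(2) by (intro mult_right_mono) auto
    also have "\<dots> \<le> diameter (g ` {u..v})"
      by (rule expanding_unimodal_diameter_image_lap[OF g uv(2) True])
    finally show ?thesis using shift[of 1] uv by (intro exI[of _ "Suc i"]) simp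
  next
    case False
    then have "u < 0" "0 < v" using uv by (auto simp: in_lap_def)
    moreover have "diameter ((g ^^ n) ` {u..v}) \<le> \<epsilon>" for n
      using short[of "n + i"] by (simp add: shift)
    ultimately obtain n where "\<theta> * (v - u) \<le> diameter ((g ^^ n) ` {u..v})"
      using grow uv(3) by blast
    then show ?thesis using uv by (intro exI[of _ "n + i"]) (simp add: shift)
  qed
qed

lemma expansive_if_straddling_intervals_grow:
  assumes g: "expanding_unimodal l g" and "0 < \<epsilon>" and \<theta>: "1 < \<theta>" "\<theta> \<le> l"
    and grow: "\<And>u v. u < 0 \<Longrightarrow> 0 < v \<Longrightarrow> {u..v} \<subseteq> {-1..1} \<Longrightarrow>
      (\<And>n. diameter ((g ^^ n) ` {u..v}) \<le> \<epsilon>) \<Longrightarrow> \<exists>n. \<theta> * (v - u) \<le> diameter ((g ^^ n) ` {u..v})"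
  shows "expansive \<epsilon> g"
  unfolding expansive_def
proof (intro allI impI)
  fix L :: "real set" assume "is_interval L \<and> L \<subseteq> {-1..1} \<and> 0 < diameter L"
  then have L: "is_interval L" "L \<subseteq> {-1..1}" "0 < diameter L" by auto
  show "\<exists>i\<ge>1. \<epsilon> < diameter ((g ^^ i) ` L)"
  proof (rule ccontr)
    assume short: "\<not> ?thesis"
    obtain x y where xy: "x \<in> L" "y \<in> L" "x < y" using diameter_pos_imp_less[OF L(3)] by blast
    define b where "b = min y (x + \<epsilon>)"
    have b: "x < b" "b - x \<le> \<epsilon>" using xy \<open>0 < \<epsilon>\<close> by (auto simp: b_def)
    have sub: "{x..b} \<subseteq> L"
    proof
      fix z assume "z \<in> {x..b}"
      then have "x \<le> z" "z \<le> y" by (auto simp: b_def)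
      then show "z \<in> L" using L(1) xy(1,2) unfolding is_interval_1 by blast
    qed
    define s where "s n = diameter ((g ^^ n) ` {x..b})" for n
    have bound: "s n \<le> \<epsilon>" for n
    proof (cases n)
      case (Suc m)
      have "(g ^^ n) ` L \<subseteq> {-1..1}" using L(2) expanding_unimodal_funpow(1)[OF g, of n] by blast
      then have "bounded ((g ^^ n) ` L)" by (rule bounded_subset[OF bounded_closed_interval])
      then have "s n \<le> diameter ((g ^^ n) ` L)"
        unfolding s_def by (rule diameter_subset[OF image_mono[OF sub]])
      moreover have "1 \<le> n" using Suc by simp
      then have "\<not> \<epsilon> < diameter ((g ^^ n) ` L)" using short by blast
      ultimately show ?thesis by simp
    qed (use b in \<open>simp add: s_def\<close>)
    have "{x..b} \<subseteq> {-1..1}" using sub L(2) by blast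
    then have "\<exists>j. \<theta> * s i \<le> s j" for i
      unfolding s_def using less_imp_le[OF b(1)] bound[unfolded s_def]
      by (intro expanding_unimodal_short_interval_regrows[OF g \<theta>(2) grow])
    moreover have "0 < s 0" using b by (simp add: s_def)
    ultimately obtain n where "\<epsilon> < s n" using recurrent_growth_unbounded[OF _ \<theta>(1)] by blast
    then show False using bound[of n] by simp
  qed
qed

lemma expanding_unimodal_diameter_funpow_image_fold:
  assumes g: "expanding_unimodal l g" and uv: "u \<le> 0" "0 \<le> v" "{u..v} \<subseteq> {-1..1}"
    and laps: "\<And>k. 1 \<le> k \<Longrightarrow> k \<le> n \<Longrightarrow> in_lap ((g ^^ k) ` {u..v})"
  shows "l ^ Suc n / 2 * (v - u) \<le> diameter ((g ^^ Suc n) ` {u..v})"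
proof -
  have l: "0 \<le> l" using expanding_unimodalD(1)[OF g] by simp
  have "(\<Prod>j<n. l) * diameter (g ` {u..v}) \<le> diameter ((g ^^ n) ` g ` {u..v})"
  proof (rule diameter_funpow_image_ge_prod)
    fix j assume "j < n"
    then have "in_lap ((g ^^ Suc j) ` {u..v})" by (intro laps) auto
    moreover obtain P Q where PQ: "(g ^^ Suc j) ` {u..v} = {P..Q}" "P \<le> Q" "{P..Q} \<subseteq> {-1..1}"
      using expanding_unimodal_funpow_image_Icc[OF g order_trans[OF uv(1,2)] uv(3)] by blast
    ultimately show "l * diameter ((g ^^ j) ` g ` {u..v}) \<le> diameter (g ` (g ^^ j) ` g ` {u..v})"
      using expanding_unimodal_diameter_image_lap[OF g PQ(2)] unfolding image_funpow_Suc_right PQ(1)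
      by simp
  qed (rule l)
  then have "l ^ n * diameter (g ` {u..v}) \<le> diameter ((g ^^ Suc n) ` {u..v})"
    by (simp add: image_funpow_Suc_right)
  moreover have "l ^ n * (l / 2 * (v - u)) \<le> l ^ n * diameter (g ` {u..v})"
    using expanding_unimodal_diameter_image_fold[OF g uv] l by (intro mult_left_mono) auto
  moreover have "l ^ Suc n / 2 * (v - u) = l ^ n * (l / 2 * (v - u))" by simp
  ultimately show ?thesis by linarith
qed

text \<open>Once l^N > 2, expansion along N - 1 laps outweighs the factor 1/2 lost at the fold.\<close>

lemma expansive_if_critical_laps:
  assumes g: "expanding_unimodal l g" and "0 < \<epsilon>" "2 < l ^ N"
    and laps: "\<And>u v k. u < 0 \<Longrightarrow> 0 < v \<Longrightarrow> {u..v} \<subseteq> {-1..1} \<Longrightarrow>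
      (\<And>n. diameter ((g ^^ n) ` {u..v}) \<le> \<epsilon>) \<Longrightarrow> 1 \<le> k \<Longrightarrow> k < N \<Longrightarrow> in_lap ((g ^^ k) ` {u..v})"
  shows "expansive \<epsilon> g"
proof (rule expansive_if_straddling_intervals_grow[OF g \<open>0 < \<epsilon>\<close>, of "min l (l ^ N / 2)"])
  show "1 < min l (l ^ N / 2)" using expanding_unimodalD(1)[OF g] \<open>2 < l ^ N\<close> by simp
  show "min l (l ^ N / 2) \<le> l" by simp
  obtain n where N: "N = Suc n" using \<open>2 < l ^ N\<close> by (cases N) auto
  fix u v assume uv: "u < 0" "0 < v" "{u..v} \<subseteq> {-1..1}"
    and short: "\<And>n. diameter ((g ^^ n) ` {u..v}) \<le> \<epsilon>"
  have "min l (l ^ N / 2) * (v - u) \<le> l ^ N / 2 * (v - u)" using uv by (intro mult_right_mono) auto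
  also have "\<dots> \<le> diameter ((g ^^ N) ` {u..v})"
    unfolding N using uv laps[OF uv short] N
    by (intro expanding_unimodal_diameter_funpow_image_fold[OF g _ _ uv(3)]) auto
  finally show "\<exists>n. min l (l ^ N / 2) * (v - u) \<le> diameter ((g ^^ n) ` {u..v})" by blast
qed

text \<open>The image of an interval around c keeps the critical orbit at an endpoint as long as the
  intermediate images lie in laps, since g is monotone on laps and maximal at c.\<close>

lemma critical_orbit_endpoint:
  assumes g: "expanding_unimodal l g" and uv: "u \<le> 0" "0 \<le> v" "{u..v} \<subseteq> {-1..1}"
  shows "1 \<le> k \<Longrightarrow> (\<And>j. 1 \<le> j \<Longrightarrow> j < k \<Longrightarrow> in_lap ((g ^^ j) ` {u..v})) \<Longrightarrow>
    \<exists>a. (g ^^ k) ` {u..v} = closed_segment a ((g ^^ k) 0)"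
proof (induction k)
  case (Suc k)
  show ?case
  proof (cases "k = 0")
    case True
    obtain P Q where PQ: "(g ^^ 1) ` {u..v} = {P..Q}" "P \<le> Q" "{P..Q} \<subseteq> {-1..1}"
      using expanding_unimodal_funpow_image_Icc[OF g order_trans[OF uv(1,2)] uv(3)] by blast
    have "g 0 \<in> {P..Q}" using PQ(1) uv(1,2) by force
    moreover have "Q \<le> g 0"
    proof -
      have "Q \<in> g ` {u..v}" using PQ(1,2) by simp
      then show ?thesis using expanding_unimodal_le_critical_value[OF g] uv(3) by auto
    qed
    ultimately have "(g ^^ 1) ` {u..v} = closed_segment P (g 0)"
      using PQ(1) by (simp add: closed_segment_eq_real_ivl)
    then show ?thesis using True by auto
  next
    case False
    then obtain a where a: "(g ^^ k) ` {u..v} = closed_segment a ((g ^^ k) 0)"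
      using Suc by force
    have "in_lap (closed_segment a ((g ^^ k) 0))" using Suc.prems(2)[of k] False a by simp
    then have "g ` (g ^^ k) ` {u..v} = closed_segment (g a) ((g ^^ Suc k) 0)"
      using expanding_unimodal_image_lap[OF g] a by simp
    then show ?thesis by (auto simp: image_comp)
  qed
qed simp

lemma expanding_unimodal_expansive:
  assumes g: "expanding_unimodal l g"
  shows "\<exists>\<epsilon>>0. expansive \<epsilon> g"
proof -
  obtain N where N: "2 < l ^ N" using real_arch_pow expanding_unimodalD(1)[OF g] by blast
  define D where "D = insert 1 ((\<lambda>k. \<bar>(g ^^ k) 0\<bar>) ` {k. 1 \<le> k \<and> k < N \<and> (g ^^ k) 0 \<noteq> 0})"
  define d where "d = Min D"
  have D: "finite D" "\<forall>x\<in>D. 0 < x" by (auto simp: D_def)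
  then have "0 < d" unfolding d_def by (simp add: D_def)
  have d_le: "d \<le> \<bar>(g ^^ k) 0\<bar>" if "1 \<le> k" "k < N" "(g ^^ k) 0 \<noteq> 0" for k
    unfolding d_def using D(1) by (rule Min_le) (use that in \<open>auto simp: D_def\<close>)
  have "expansive (d / 2) g"
  proof (rule expansive_if_critical_laps[OF g _ N])
    fix u v k assume uv: "u < 0" "0 < v" "{u..v} \<subseteq> {-1..1}"
      and short: "\<And>n. diameter ((g ^^ n) ` {u..v}) \<le> d / 2"
    show "1 \<le> k \<Longrightarrow> k < N \<Longrightarrow> in_lap ((g ^^ k) ` {u..v})"
    proof (induction k rule: less_induct)
      case (less k)
      obtain a where a: "(g ^^ k) ` {u..v} = closed_segment a ((g ^^ k) 0)"
        using critical_orbit_endpoint[OF g _ _ uv(3) less.prems(1)] less uv by fastforce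
      have I: "closed_segment a ((g ^^ k) 0) \<subseteq> {-1..1}"
        using a expanding_unimodal_funpow(1)[OF g, of k] uv(3) by blast
      show ?case
      proof (cases "(g ^^ k) 0 = 0")
        case False
        have "diameter (closed_segment a ((g ^^ k) 0)) < \<bar>(g ^^ k) 0\<bar>"
          using short[of k] a d_le[OF less.prems False] \<open>0 < d\<close> by simp
        then show ?thesis using in_lap_if_far_point[OF _ I ends_in_segment(2)] a by simp
      qed (use a I in_lap_closed_segment_0 in simp)
    qed
  qed (use \<open>0 < d\<close> in simp)
  then show ?thesis using \<open>0 < d\<close> by (intro exI[of _ "d / 2"]) simp
qed

section \<open>Maps close to f\<close>

lemma pw_exp_unimodal_orbit_close:
  assumes f: "pw_exp_unimodal f" and l: "expanding_unimodal l f" and "0 < \<eta>"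
  shows "\<exists>\<delta>>0. \<forall>g k. pw_exp_unimodal g \<longrightarrow> g ` {-1..1} \<subseteq> {-1..1} \<longrightarrow>
    norm1 (\<lambda>x. g x - f x) < \<delta> \<longrightarrow> k \<le> n \<longrightarrow> \<bar>(g ^^ k) 0 - (f ^^ k) 0\<bar> < \<eta>"
proof -
  obtain \<delta> where \<delta>: "0 < \<delta>" "\<forall>g. g ` {-1..1} \<subseteq> {-1..1} \<longrightarrow> (\<forall>y\<in>{-1..1}. dist (g y) (f y) < \<delta>) \<longrightarrow>
      (\<forall>k\<le>n. dist ((g ^^ k) 0) ((f ^^ k) 0) < \<eta>)"
    using funpow_uniformly_close[OF compact_Icc expanding_unimodalD(2)[OF l] expanding_unimodal_maps_into[OF l]
        _ \<open>0 < \<eta>\<close>, of 0 n]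
    by auto
  have "\<bar>(g ^^ k) 0 - (f ^^ k) 0\<bar> < \<eta>"
    if g: "pw_exp_unimodal g" "g ` {-1..1} \<subseteq> {-1..1}" "norm1 (\<lambda>x. g x - f x) < \<delta>" "k \<le> n" for g k
  proof -
    have B: "B1 f" "B1 g" using f g(1) by (simp_all add: pw_exp_unimodal_def)
    have "dist (g y) (f y) < \<delta>" if "y \<in> {-1..1}" for y
      using norm1_diff_ge(1)[OF B that] g(3) by (simp add: dist_real_def)
    then show ?thesis using \<delta>(2) g(2,4) by (simp add: dist_real_def)
  qed
  then show ?thesis using \<delta>(1) by blast
qed

lemma nonperiodic_stably_expansive:
  assumes f: "pw_exp_unimodal f" and np: "\<not> periodic_pt f 0"
  shows "\<exists>\<epsilon>>0. stably_expansive \<epsilon> f"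
proof -
  obtain l \<delta>0 where \<delta>0: "0 < \<delta>0" "expanding_unimodal l f"
    "\<And>g. pw_exp_unimodal g \<Longrightarrow> norm1 (\<lambda>x. g x - f x) < \<delta>0 \<Longrightarrow> expanding_unimodal l g"
    using pw_exp_unimodal_expanding_nearby[OF f] by metis
  obtain N where N: "2 < l ^ N" using real_arch_pow expanding_unimodalD(1)[OF \<delta>0(2)] by blast
  define D where "D = insert 1 ((\<lambda>k. \<bar>(f ^^ k) 0\<bar>) ` {1..<N})"
  define d where "d = Min D"
  have "finite D" "\<forall>x\<in>D. 0 < x" using np by (auto simp: D_def periodic_pt_def)
  then have "0 < d" unfolding d_def by (simp add: D_def)
  have d_le: "d \<le> \<bar>(f ^^ k) 0\<bar>" if "1 \<le> k" "k < N" for k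
    unfolding d_def using \<open>finite D\<close> by (rule Min_le) (use that in \<open>simp add: D_def\<close>)
  have "0 < d / 2" using \<open>0 < d\<close> by simp
  then obtain \<delta>1 where \<delta>1: "0 < \<delta>1" "\<forall>g k. pw_exp_unimodal g \<longrightarrow> g ` {-1..1} \<subseteq> {-1..1} \<longrightarrow>
      norm1 (\<lambda>x. g x - f x) < \<delta>1 \<longrightarrow> k \<le> N \<longrightarrow> \<bar>(g ^^ k) 0 - (f ^^ k) 0\<bar> < d / 2"
    using pw_exp_unimodal_orbit_close[OF f \<delta>0(2)] by blast
  have "expansive (d / 4) g" if g: "pw_exp_unimodal g" "norm1 (\<lambda>x. g x - f x) < min \<delta>0 \<delta>1" for g
  proof -
    have l: "expanding_unimodal l g" using \<delta>0(3) g by simp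
    show ?thesis
    proof (rule expansive_if_critical_laps[OF l _ N])
      fix u v k assume uv: "u < 0" "0 < v" "{u..v} \<subseteq> {-1..1}"
        and short: "\<And>n. diameter ((g ^^ n) ` {u..v}) \<le> d / 4" and k: "1 \<le> k" "k < N"
      have "u \<le> v" using uv(1,2) by simp
      then obtain P Q where PQ: "(g ^^ k) ` {u..v} = {P..Q}" "P \<le> Q" "{P..Q} \<subseteq> {-1..1}"
        using expanding_unimodal_funpow_image_Icc[OF l _ uv(3)] by blast
      have "\<bar>(g ^^ k) 0 - (f ^^ k) 0\<bar> < d / 2"
        using \<delta>1(2)[rule_format, of g k] g expanding_unimodal_maps_into[OF l] k by simp
      then have "diameter ((g ^^ k) ` {u..v}) < \<bar>(g ^^ k) 0\<bar>"
        using short[of k] d_le[OF k] by linarith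
      moreover have "(g ^^ k) 0 \<in> (g ^^ k) ` {u..v}" using uv by simp
      ultimately show "in_lap ((g ^^ k) ` {u..v})"
        using in_lap_if_far_point[of "{P..Q}" "(g ^^ k) 0"] PQ by simp
    qed (use \<open>0 < d\<close> in simp)
  qed
  then have "stably_expansive (d / 4) f"
    unfolding stably_expansive_def using \<delta>0(1) \<delta>1(1) by (intro exI[of _ "min \<delta>0 \<delta>1"]) simp
  then show ?thesis using \<open>0 < d\<close> by (intro exI[of _ "d / 4"]) simp
qed

section \<open>The periodic case\<close>

definition stretches_near :: "real \<Rightarrow> real \<Rightarrow> real \<Rightarrow> (real \<Rightarrow> real) \<Rightarrow> bool" where
  "stretches_near c w r g \<longleftrightarrow>
     (\<forall>x y. w - r \<le> x \<longrightarrow> x \<le> y \<longrightarrow> y \<le> w + r \<longrightarrow> c * (y - x) \<le> \<bar>g y - g x\<bar>)"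

definition folds_near :: "real \<Rightarrow> real \<Rightarrow> (real \<Rightarrow> real) \<Rightarrow> bool" where
  "folds_near c r g \<longleftrightarrow>
     (\<forall>u v. -r \<le> u \<longrightarrow> u \<le> 0 \<longrightarrow> 0 \<le> v \<longrightarrow> v \<le> r \<longrightarrow> c * (v - u) \<le> diameter (g ` {u..v}))"

lemma pw_exp_unimodal_stable_slope:
  assumes f: "pw_exp_unimodal f" and w: "-1 < w" "w < 1" "w \<noteq> 0" and "0 < \<tau>"
  shows "\<forall>\<^sub>F r in at_right 0. \<forall>g. pw_exp_unimodal g \<longrightarrow> norm1 (\<lambda>x. g x - f x) < \<tau> / 2 \<longrightarrow>
    stretches_near (\<bar>pw_deriv f w\<bar> - \<tau>) w r g"
proof -
  have Bf: "B1 f" using f by (simp add: pw_exp_unimodal_def)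
  have "0 < \<tau> / 2" using \<open>0 < \<tau>\<close> by simp
  then obtain d where d: "0 < d" "\<forall>\<xi>. dist \<xi> w < d \<longrightarrow> dist (pw_deriv f \<xi>) (pw_deriv f w) < \<tau> / 2"
    using B1_isCont_pw_deriv[OF Bf w] unfolding continuous_at_eps_delta by blast
  define r0 where "r0 = min d (min \<bar>w\<bar> (1 - \<bar>w\<bar>))"
  have "0 < r0" using d(1) w by (auto simp: r0_def)
  show ?thesis unfolding eventually_at_right_field stretches_near_def
  proof (intro exI[of _ r0] conjI allI impI)
    fix r g x y assume r: "0 < r" "r < r0" and g: "pw_exp_unimodal g" "norm1 (\<lambda>x. g x - f x) < \<tau> / 2"
      and xy: "w - r \<le> x" "x \<le> y" "y \<le> w + r"
    have Bg: "B1 g" using g(1) by (simp add: pw_exp_unimodal_def)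
    have lap: "in_lap {x..y}"
      using xy r w by (cases "w < 0") (auto simp: in_lap_def r0_def)
    show "(\<bar>pw_deriv f w\<bar> - \<tau>) * (y - x) \<le> \<bar>g y - g x\<bar>"
    proof (rule B1_abs_increment_ge[OF Bg xy(2) lap])
      fix \<xi> assume "x < \<xi>" "\<xi> < y"
      then have \<xi>: "\<xi> \<in> {-1..1}" "dist \<xi> w < d"
        using lap xy r by (auto simp: in_lap_def r0_def dist_real_def)
      have "\<bar>pw_deriv g \<xi> - pw_deriv f \<xi>\<bar> < \<tau> / 2"
        using norm1_diff_ge(2)[OF Bf Bg \<xi>(1)] g(2) by linarith
      moreover have "\<bar>pw_deriv f \<xi> - pw_deriv f w\<bar> < \<tau> / 2"
        using d(2) \<xi>(2) by (simp add: dist_real_def)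
      ultimately show "\<bar>pw_deriv f w\<bar> - \<tau> \<le> \<bar>pw_deriv g \<xi>\<bar>" by linarith
    qed
  qed (fact \<open>0 < r0\<close>)
qed

lemma pw_exp_unimodal_stable_fold:
  assumes f: "pw_exp_unimodal f" and "0 < \<tau>"
  shows "\<forall>\<^sub>F r in at_right 0. \<forall>g. pw_exp_unimodal g \<longrightarrow> norm1 (\<lambda>x. g x - f x) < \<tau> / 2 \<longrightarrow>
    folds_near ((min \<bar>dQ {0..1} f 0\<bar> \<bar>dQ {-1..0} f 0\<bar> - \<tau>) / 2) r g"
proof -
  have Bf: "B1 f" using f by (simp add: pw_exp_unimodal_def)
  obtain \<Lambda> where \<Lambda>: "1 < \<Lambda>" "\<Lambda> \<le> dQ {-1..0} f 0"
    "\<And>x. -1 \<le> x \<Longrightarrow> x < 0 \<Longrightarrow> \<Lambda> \<le> pw_deriv f x"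
    "\<And>x. 0 \<le> x \<Longrightarrow> x \<le> 1 \<Longrightarrow> pw_deriv f x \<le> -\<Lambda>"
    using pw_exp_unimodal_expansion[OF f] by metis
  define m where "m = min \<bar>dQ {0..1} f 0\<bar> \<bar>dQ {-1..0} f 0\<bar>"
  have m: "m \<le> dQ {-1..0} f 0" "m \<le> - dQ {0..1} f 0"
    using \<Lambda>(1,2) \<Lambda>(4)[of 0] by (auto simp: m_def pw_deriv_def)
  have "0 < \<tau> / 2" using \<open>0 < \<tau>\<close> by simp
  moreover have "(0::real) \<in> {-1..0}" by simp
  ultimately obtain d1 where d1: "0 < d1"
    "\<forall>\<xi>\<in>{-1..0}. dist \<xi> 0 < d1 \<longrightarrow> dist (dQ {-1..0} f \<xi>) (dQ {-1..0} f 0) < \<tau> / 2"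
    using continuous_on_iff[THEN iffD1, OF B1D(2)[OF Bf], rule_format] by blast
  have "(0::real) \<in> {0..1}" by simp
  with \<open>0 < \<tau> / 2\<close> obtain d2 where d2: "0 < d2"
    "\<forall>\<xi>\<in>{0..1}. dist \<xi> 0 < d2 \<longrightarrow> dist (dQ {0..1} f \<xi>) (dQ {0..1} f 0) < \<tau> / 2"
    using continuous_on_iff[THEN iffD1, OF B1D(3)[OF Bf], rule_format] by blast
  define r0 where "r0 = min 1 (min d1 d2)"
  have "0 < r0" using d1(1) d2(1) by (simp add: r0_def)
  show ?thesis unfolding eventually_at_right_field folds_near_def
  proof (intro exI[of _ r0] conjI allI impI)
    fix r g u v assume r: "0 < r" "r < r0" and g: "pw_exp_unimodal g" "norm1 (\<lambda>x. g x - f x) < \<tau> / 2"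
      and uv: "-r \<le> u" "u \<le> 0" "0 \<le> v" "v \<le> r"
    have Bg: "B1 g" using g(1) by (simp add: pw_exp_unimodal_def)
    have close: "\<bar>pw_deriv g \<xi> - pw_deriv f \<xi>\<bar> < \<tau> / 2" if "\<xi> \<in> {-1..1}" for \<xi>
      using norm1_diff_ge(2)[OF Bf Bg that] g(2) by linarith
    have "(m - \<tau>) * (0 - u) \<le> g 0 - g u"
    proof (rule B1_increment_ge[OF Bg uv(2)])
      show "in_lap {u..0}" using uv r by (simp add: in_lap_def r0_def)
      fix \<xi> assume \<xi>: "u < \<xi>" "\<xi> < 0"
      then have "\<bar>dQ {-1..0} f \<xi> - dQ {-1..0} f 0\<bar> < \<tau> / 2"
        using d1(2) uv r by (auto simp: r0_def dist_real_def)
      moreover have "\<bar>dQ {-1..0} g \<xi> - dQ {-1..0} f \<xi>\<bar> < \<tau> / 2"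
        using close[of \<xi>] \<xi> uv r by (simp add: pw_deriv_def r0_def)
      ultimately show "m - \<tau> \<le> pw_deriv g \<xi>"
        using m(1) \<xi> unfolding abs_less_iff by (simp add: pw_deriv_def)
    qed
    moreover have "(m - \<tau>) * (v - 0) \<le> g 0 - g v"
    proof (rule B1_decrement_ge[OF Bg uv(3)])
      show "in_lap {0..v}" using uv r by (simp add: in_lap_def r0_def)
      fix \<xi> assume \<xi>: "0 < \<xi>" "\<xi> < v"
      then have "\<bar>dQ {0..1} f \<xi> - dQ {0..1} f 0\<bar> < \<tau> / 2"
        using d2(2) uv r by (auto simp: r0_def dist_real_def)
      moreover have "\<bar>dQ {0..1} g \<xi> - dQ {0..1} f \<xi>\<bar> < \<tau> / 2"
        using close[of \<xi>] \<xi> uv r by (simp add: pw_deriv_def r0_def)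
      ultimately show "pw_deriv g \<xi> \<le> - (m - \<tau>)"
        using m(2) \<xi> unfolding abs_less_iff by (simp add: pw_deriv_def)
    qed
    moreover have "\<bar>g 0 - g u\<bar> \<le> diameter (g ` {u..v})" "\<bar>g 0 - g v\<bar> \<le> diameter (g ` {u..v})"
    proof -
      have "continuous_on {u..v} g"
        using uv r by (intro continuous_on_subset[OF B1D(1)[OF Bg]]) (auto simp: r0_def)
      then show "\<bar>g 0 - g u\<bar> \<le> diameter (g ` {u..v})" "\<bar>g 0 - g v\<bar> \<le> diameter (g ` {u..v})"
        using dist_le_diameter_image[of "{u..v}" g] uv by (auto simp: dist_real_def)
    qed
    ultimately have "(m - \<tau>) / 2 * (v - u) \<le> diameter (g ` {u..v})" by (simp add: algebra_simps)
    then show "(min \<bar>dQ {0..1} f 0\<bar> \<bar>dQ {-1..0} f 0\<bar> - \<tau>) / 2 * (v - u) \<le> diameter (g ` {u..v})"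
      by (simp add: m_def)
  qed (fact \<open>0 < r0\<close>)
qed

lemma prime_period_orbit_interior:
  assumes f: "expanding_unimodal l f" and p: "prime_period f 0 p" and k: "1 \<le> k" "k < p"
  shows "-1 < (f ^^ k) 0" "(f ^^ k) 0 < 1" "(f ^^ k) 0 \<noteq> 0"
proof -
  have "(f ^^ k) 0 \<in> (f ^^ k) ` {-1..1}" by simp
  then have I: "(f ^^ k) 0 \<in> {-1..1}" using expanding_unimodal_funpow(1)[OF f, of k] by blast
  have "f ((f ^^ k) 0) \<noteq> -1"
  proof
    assume fk: "f ((f ^^ k) 0) = -1"
    have fixed: "(f ^^ j) (-1) = -1" for j
      by (induction j) (simp_all add: expanding_unimodalD(3)[OF f])
    obtain j where "p = j + Suc k" using less_imp_Suc_add[OF k(2)] by auto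
    then have "(f ^^ p) 0 = (f ^^ j) ((f ^^ Suc k) 0)" by (simp only: funpow_add o_apply)
    also have "\<dots> = -1" using fk fixed by simp
    finally show False using p by (simp add: prime_period_def)
  qed
  then have "(f ^^ k) 0 \<noteq> -1" "(f ^^ k) 0 \<noteq> 1"
    using expanding_unimodalD(3,4)[OF f] by auto
  then show "-1 < (f ^^ k) 0" "(f ^^ k) 0 < 1" using I by auto
  show "(f ^^ k) 0 \<noteq> 0" using p k by (simp add: prime_period_def)
qed

text \<open>While the images stay shorter than r/2 and the critical orbit of g stays within r/2 of z,
  the j-th image lies within r of z j, where g stretches by c j.\<close>

lemma diameter_funpow_image_shadowing:
  assumes g: "expanding_unimodal l g" and uv: "u \<le> 0" "0 \<le> v" "{u..v} \<subseteq> {-1..1}"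
    and short: "\<And>n. diameter ((g ^^ n) ` {u..v}) \<le> r / 2"
    and close: "\<And>j. j < n \<Longrightarrow> \<bar>(g ^^ Suc j) 0 - z j\<bar> < r / 2"
    and slope: "\<And>j. j < n \<Longrightarrow> stretches_near (c j) (z j) r g"
    and c: "\<And>j. j < n \<Longrightarrow> 0 \<le> c j"
  shows "(\<Prod>j<n. c j) * diameter (g ` {u..v}) \<le> diameter ((g ^^ Suc n) ` {u..v})"
proof -
  have "(\<Prod>j<n. c j) * diameter (g ` {u..v}) \<le> diameter ((g ^^ n) ` g ` {u..v})"
  proof (rule diameter_funpow_image_ge_prod)
    fix j assume j: "j < n"
    obtain P Q where PQ: "(g ^^ Suc j) ` {u..v} = {P..Q}" "P \<le> Q" "{P..Q} \<subseteq> {-1..1}"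
      using expanding_unimodal_funpow_image_Icc[OF g order_trans[OF uv(1,2)] uv(3)] by blast
    have "(g ^^ Suc j) 0 \<in> {P..Q}" using uv(1,2) unfolding PQ(1)[symmetric] by simp
    moreover have "Q - P \<le> r / 2" using short[of "Suc j"] PQ(1,2) by simp
    ultimately have "z j - r \<le> P" "Q \<le> z j + r"
      using close[OF j] unfolding abs_less_iff atLeastAtMost_iff by linarith+
    then have "c j * (Q - P) \<le> \<bar>g Q - g P\<bar>" using slope[OF j] PQ(2) unfolding stretches_near_def by blast
    also have "\<dots> \<le> diameter (g ` {P..Q})"
      using dist_le_diameter_image[OF compact_Icc continuous_on_subset[OF expanding_unimodalD(2)[OF g] PQ(3)],
          of Q P] PQ(2)
      by (simp add: dist_real_def)
    finally show "c j * diameter ((g ^^ j) ` g ` {u..v}) \<le> diameter (g ` (g ^^ j) ` g ` {u..v})"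
      unfolding image_funpow_Suc_right PQ(1) using PQ(2) by simp
  qed (rule c)
  then show ?thesis by (simp add: image_funpow_Suc_right)
qed

lemma pw_exp_unimodal_abs_pw_deriv_gt_1:
  assumes f: "pw_exp_unimodal f" and x: "x \<in> {-1..1}"
  shows "1 < \<bar>pw_deriv f x\<bar>"
proof -
  obtain \<Lambda> where \<Lambda>: "1 < \<Lambda>" "\<Lambda> \<le> dQ {-1..0} f 0"
    "\<And>x. -1 \<le> x \<Longrightarrow> x < 0 \<Longrightarrow> \<Lambda> \<le> pw_deriv f x"
    "\<And>x. 0 \<le> x \<Longrightarrow> x \<le> 1 \<Longrightarrow> pw_deriv f x \<le> -\<Lambda>"
    using pw_exp_unimodal_expansion[OF f] by metis
  show ?thesis using \<Lambda>(1) \<Lambda>(3)[of x] \<Lambda>(4)[of x] x by (cases "x < 0") auto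
qed

lemma prime_period_abs_deriv_funpow:
  assumes f: "pw_exp_unimodal f" "expanding_unimodal l f" and p: "prime_period f 0 p"
  shows "\<bar>deriv (f ^^ (p - 1)) (f 0)\<bar> = (\<Prod>j<p - 1. \<bar>pw_deriv f ((f ^^ Suc j) 0)\<bar>)"
proof -
  have "((f ^^ (p - 1)) has_real_derivative (\<Prod>j<p - 1. pw_deriv f ((f ^^ Suc j) 0))) (at (f 0))"
  proof (rule DERIV_funpow)
    fix j assume "j < p - 1"
    then have "-1 < (f ^^ Suc j) 0" "(f ^^ Suc j) 0 < 1" "(f ^^ Suc j) 0 \<noteq> 0"
      using prime_period_orbit_interior[OF f(2) p, of "Suc j"] by auto
    moreover have "(f ^^ j) (f 0) = (f ^^ Suc j) 0" by (simp add: funpow_swap1)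
    ultimately show "(f has_real_derivative pw_deriv f ((f ^^ Suc j) 0)) (at ((f ^^ j) (f 0)))"
      using B1_has_real_derivative_pw_deriv f(1) by (simp add: pw_exp_unimodal_def)
  qed
  then show ?thesis by (simp add: DERIV_imp_deriv abs_prod)
qed

lemma expansive_if_fold_and_shadowing:
  assumes g: "expanding_unimodal l g" and "0 < r"
    and \<theta>: "1 < \<theta>" "\<theta> \<le> l" "\<theta> \<le> c0 * (\<Prod>j<n. c j)" and c: "\<And>j. j < n \<Longrightarrow> 0 \<le> c j"
    and fold: "folds_near c0 r g" and slope: "\<And>j. j < n \<Longrightarrow> stretches_near (c j) (z j) r g"
    and close: "\<And>j. j < n \<Longrightarrow> \<bar>(g ^^ Suc j) 0 - z j\<bar> < r / 2"
  shows "expansive (r / 2) g"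
proof (rule expansive_if_straddling_intervals_grow[OF g _ \<theta>(1,2)])
  show "0 < r / 2" using \<open>0 < r\<close> by simp
  fix u v assume uv: "u < 0" "0 < v" "{u..v} \<subseteq> {-1..1}"
    and short: "\<And>k. diameter ((g ^^ k) ` {u..v}) \<le> r / 2"
  have "v - u \<le> r / 2" using short[of 0] uv by simp
  then have "c0 * (v - u) \<le> diameter (g ` {u..v})" using uv fold unfolding folds_near_def by auto
  have "\<theta> * (v - u) \<le> c0 * (\<Prod>j<n. c j) * (v - u)" using \<theta>(3) uv by (intro mult_right_mono) auto
  also have "\<dots> = (\<Prod>j<n. c j) * (c0 * (v - u))" by (simp add: mult_ac)
  also have "\<dots> \<le> (\<Prod>j<n. c j) * diameter (g ` {u..v})"
    using \<open>c0 * (v - u) \<le> diameter (g ` {u..v})\<close> c by (intro mult_left_mono prod_nonneg) auto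
  also have "\<dots> \<le> diameter ((g ^^ Suc n) ` {u..v})"
    using uv by (intro diameter_funpow_image_shadowing[OF g _ _ uv(3) short close slope c]) auto
  finally show "\<exists>k. \<theta> * (v - u) \<le> diameter ((g ^^ k) ` {u..v})" by blast
qed

text \<open>Goodness says m/2 \<Prod> a j > 1 for the slopes a j of f along the critical orbit and the
  smaller one-sided slope m at c; a margin \<tau> keeps this true for the slopes of every g close to f
  near the orbit.\<close>

lemma periodic_good_stably_expansive:
  assumes f: "pw_exp_unimodal f" and p: "2 \<le> p" "prime_period f 0 p"
    and good: "2 < \<bar>deriv (f ^^ (p - 1)) (f 0)\<bar> * min \<bar>dQ {0..1} f 0\<bar> \<bar>dQ {-1..0} f 0\<bar>"
  shows "\<exists>\<epsilon>>0. stably_expansive \<epsilon> f"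
proof -
  obtain l \<delta>0 where \<delta>0: "0 < \<delta>0" "expanding_unimodal l f"
    "\<And>g. pw_exp_unimodal g \<Longrightarrow> norm1 (\<lambda>x. g x - f x) < \<delta>0 \<Longrightarrow> expanding_unimodal l g"
    using pw_exp_unimodal_expanding_nearby[OF f] by metis
  define n where "n = p - 1"
  define z where "z j = (f ^^ Suc j) 0" for j
  define a where "a j = \<bar>pw_deriv f (z j)\<bar>" for j
  define m where "m = min \<bar>dQ {0..1} f 0\<bar> \<bar>dQ {-1..0} f 0\<bar>"
  have z: "-1 < z j" "z j < 1" "z j \<noteq> 0" if "j < n" for j
    using prime_period_orbit_interior[OF \<delta>0(2) p(2), of "Suc j"] that by (auto simp: z_def n_def)
  have a: "1 < a j" if "j < n" for j
    using pw_exp_unimodal_abs_pw_deriv_gt_1[OF f] z[OF that] by (simp add: a_def)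
  have "1 < m / 2 * (\<Prod>j<n. a j)"
    using good prime_period_abs_deriv_funpow[OF f \<delta>0(2) p(2)]
    by (simp add: m_def n_def a_def z_def mult.commute)
  then have "\<forall>\<^sub>F \<tau> in at_right 0. 1 < (m - \<tau>) / 2 * (\<Prod>j<n. a j - \<tau>) \<and> \<tau> < 1 \<and> 0 < \<tau>"
    by (intro eventually_conj eventually_perturbed_prod_gt_1)
      (auto simp: eventually_at_right_field intro: exI[of _ 1])
  then obtain \<tau> where \<tau>: "1 < (m - \<tau>) / 2 * (\<Prod>j<n. a j - \<tau>)" "\<tau> < 1" "0 < \<tau>"
    using eventually_happens'[OF trivial_limit_at_right_real] by blast
  have "\<forall>\<^sub>F r in at_right 0. 0 < r \<and>
      (\<forall>g. pw_exp_unimodal g \<longrightarrow> norm1 (\<lambda>x. g x - f x) < \<tau> / 2 \<longrightarrow> folds_near ((m - \<tau>) / 2) r g) \<and>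
      (\<forall>j\<in>{..<n}. \<forall>g. pw_exp_unimodal g \<longrightarrow> norm1 (\<lambda>x. g x - f x) < \<tau> / 2 \<longrightarrow>
        stretches_near (a j - \<tau>) (z j) r g)"
    using pw_exp_unimodal_stable_fold[OF f \<tau>(3)] pw_exp_unimodal_stable_slope[OF f z \<tau>(3)]
    unfolding m_def a_def
    by (intro eventually_conj eventually_at_right_less eventually_ball_finite) auto
  then obtain r where r: "0 < r"
    "\<forall>g. pw_exp_unimodal g \<longrightarrow> norm1 (\<lambda>x. g x - f x) < \<tau> / 2 \<longrightarrow> folds_near ((m - \<tau>) / 2) r g"
    "\<forall>j\<in>{..<n}. \<forall>g. pw_exp_unimodal g \<longrightarrow> norm1 (\<lambda>x. g x - f x) < \<tau> / 2 \<longrightarrow>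
      stretches_near (a j - \<tau>) (z j) r g"
    using eventually_happens'[OF trivial_limit_at_right_real] by blast
  have "0 < r / 2" using r(1) by simp
  then obtain \<delta>1 where \<delta>1: "0 < \<delta>1" "\<forall>g k. pw_exp_unimodal g \<longrightarrow> g ` {-1..1} \<subseteq> {-1..1} \<longrightarrow>
      norm1 (\<lambda>x. g x - f x) < \<delta>1 \<longrightarrow> k \<le> p \<longrightarrow> \<bar>(g ^^ k) 0 - (f ^^ k) 0\<bar> < r / 2"
    using pw_exp_unimodal_orbit_close[OF f \<delta>0(2)] by blast
  have "expansive (r / 2) g"
    if g: "pw_exp_unimodal g" "norm1 (\<lambda>x. g x - f x) < min \<delta>0 (min \<delta>1 (\<tau> / 2))" for g
  proof -
    have l: "expanding_unimodal l g" using \<delta>0(3) g by simp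
    show ?thesis
    proof (rule expansive_if_fold_and_shadowing[OF l r(1), of "min l ((m - \<tau>) / 2 * (\<Prod>j<n. a j - \<tau>))"])
      show "1 < min l ((m - \<tau>) / 2 * (\<Prod>j<n. a j - \<tau>))"
        using \<tau>(1) expanding_unimodalD(1)[OF l] by simp
      show "0 \<le> a j - \<tau>" if "j < n" for j using a[OF that] \<tau>(2) by simp
      show "folds_near ((m - \<tau>) / 2) r g" using r(2) g by simp
      show "\<bar>(g ^^ Suc j) 0 - z j\<bar> < r / 2" if "j < n" for j
        using \<delta>1(2)[rule_format, of g "Suc j"] g expanding_unimodal_maps_into[OF l] that
        by (simp add: z_def n_def)
      show "stretches_near (a j - \<tau>) (z j) r g" if "j < n" for j using r(3) g that by simp
    qed simp_all
  qed
  moreover have "0 < min \<delta>0 (min \<delta>1 (\<tau> / 2))" using \<delta>0(1) \<delta>1(1) \<tau>(3) by simp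
  ultimately have "stably_expansive (r / 2) f" unfolding stably_expansive_def by blast
  then show ?thesis using \<open>0 < r / 2\<close> by blast
qed

theorem proposition2p1:
  fixes f :: "real \<Rightarrow> real"
  assumes "pw_exp_unimodal f"
  shows "(\<exists>\<epsilon>>0. expansive \<epsilon> f) \<and> (good f \<longrightarrow> (\<exists>\<epsilon>>0. stably_expansive \<epsilon> f))"
proof
  obtain l \<delta> where "expanding_unimodal l f"
    using pw_exp_unimodal_expanding_nearby[OF assms] by metis
  then show "\<exists>\<epsilon>>0. expansive \<epsilon> f" by (rule expanding_unimodal_expansive)
  show "good f \<longrightarrow> (\<exists>\<epsilon>>0. stably_expansive \<epsilon> f)"
  proof
    assume "good f"
    then consider "\<not> periodic_pt f 0"
      | p where "2 \<le> p" "prime_period f 0 p"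
          "2 < \<bar>deriv (f ^^ (p - 1)) (f 0)\<bar> * min \<bar>dQ {0..1} f 0\<bar> \<bar>dQ {-1..0} f 0\<bar>"
      unfolding good_def by blast
    then show "\<exists>\<epsilon>>0. stably_expansive \<epsilon> f"
    proof cases
      case 1
      then show ?thesis by (rule nonperiodic_stably_expansive[OF assms])
    next
      case 2
      then show ?thesis by (rule periodic_good_stably_expansive[OF assms])
    qed
  qed
qed

end
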